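(* Let $L_x,L_z>0$ and $\mathcal{A}=\{[x,0,z]^{\mathsf{T}}:|x|\le L_x/2,\ |z|\le L_z/2\}$. For $k\in\{1,2\}$ let $r_k>0$, $\phi_k,\theta_k\in[0,\pi]$, $\Phi_k=\cos\phi_k\sin\theta_k$, $\Psi_k=\sin\phi_k\sin\theta_k$, $\Theta_k=\cos\theta_k$, and assume $\Psi_k>0$. Let $k_0>0$ and $$\mathsf{Q}_k(x,z)=\frac{\sqrt{r_k\Psi_k}\,e^{-\mathrm{j}k_0(x^2+z^2-2r_k(\Phi_kx+\Theta_kz)+r_k^2)^{1/2}}}{\sqrt{4\pi}\,(x^2+z^2-2r_k(\Phi_kx+\Theta_kz)+r_k^2)^{3/4}},\qquad \mathsf{g}_k=\int_{-L_z/2}^{L_z/2}\int_{-L_x/2}^{L_x/2}|\mathsf{Q}_k(x,z)|^2\mathrm{d}x\,\mathrm{d}z.$$ Then $$\mathsf{g}_k=\frac{1}{4\pi}\sum_{x\in\mathcal{X}_k}\sum_{z\in\mathcal{Z}_k}\arctan\!\left(\frac{xz/\Psi_k}{\sqrt{\Psi_k^2+x^2+z^2}}\right)\triangleq\mathsf{g}_k^{\mathsf{p}},$$ where $\mathcal{X}_k=\{\frac{L_x}{2r_k}+\Phi_k,\frac{L_x}{2r_k}-\Phi_k\}$ and $\mathcal{Z}_k=\{\frac{L_z}{2r_k}+\Theta_k,\frac{L_z}{2r_k}-\Theta_k\}$. Moreover, approximating each one-dimensional integral in $\rho=\frac{1}{\sqrt{\mathsf{g}_1\mathsf{g}_2}}\int_{-L_z/2}^{L_z/2}\int_{-L_x/2}^{L_x/2}\mathsf{Q}_1^*(x,z)\mathsf{Q}_2(x,z)\mathrm{d}x\,\mathrm{d}z$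 by the $n$-point Chebyshev–Gauss quadrature rule $\int_{-1}^1 f(t)\mathrm{d}t\approx\frac{\pi}{n}\sum_{j=1}^n\sqrt{1-\psi_j^2}f(\psi_j)$, $\psi_j=\cos\frac{(2j-1)\pi}{2n}$, gives $$\rho\approx\frac{\pi^2A}{4n^2\sqrt{\mathsf{g}_1^{\mathsf{p}}\mathsf{g}_2^{\mathsf{p}}}}\sum_{j=1}^n\sum_{j'=1}^n\sqrt{(1-\psi_j^2)(1-\psi_{j'}^2)}\,\mathsf{Q}_1^*\Big(\tfrac{L_x\psi_j}{2},\tfrac{L_z\psi_{j'}}{2}\Big)\mathsf{Q}_2\Big(\tfrac{L_x\psi_j}{2},\tfrac{L_z\psi_{j'}}{2}\Big)\triangleq\rho_{\mathsf{p}},$$ with $A=L_xL_z$.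
   Context: This is the planar continuous-aperture array in the $x$-$z$ plane centred at the origin; user $k$ is located at $\mathbf{s}_k=r_k[\Phi_k,\Psi_k,\Theta_k]^{\mathsf{T}}$, and $\mathsf{Q}_k(x,z)=\mathsf{G}_k([x,0,z]^{\mathsf{T}})$ where $\mathsf{G}_k(\mathbf{r})=\frac{e^{-\mathrm{j}k_0\|\mathbf{r}-\mathbf{s}_k\|}}{\sqrt{4\pi}\|\mathbf{r}-\mathbf{s}_k\|}\sqrt{\frac{|\mathbf{e}^{\mathsf{T}}(\mathbf{s}_k-\mathbf{r})|}{\|\mathbf{r}-\mathbf{s}_k\|}}$ with normal $\mathbf{e}=[0,1,0]^{\mathsf{T}}$; $\mathsf{g}_k$ is the channel gain and $\rho$ the channel correlation factor; $n$ is a complexity-vs-accuracy parameter. *)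

theory Defs
  imports "HOL-Analysis.Analysis"
begin

definition PhiD :: "real \<Rightarrow> real \<Rightarrow> real" where "PhiD phi theta = cos phi * sin theta"
definition PsiD :: "real \<Rightarrow> real \<Rightarrow> real" where "PsiD phi theta = sin phi * sin theta"
definition ThetaD :: "real \<Rightarrow> real \<Rightarrow> real" where "ThetaD phi theta = cos theta"

definition Dist2 :: "real \<Rightarrow> real \<Rightarrow> real \<Rightarrow> real \<Rightarrow> real \<Rightarrow> real" where
  "Dist2 r phi theta x z = x^2 + z^2 - 2 * r * (PhiD phi theta * x + ThetaD phi theta * z) + r^2"

definition Qch :: "real \<Rightarrow> real \<Rightarrow> real \<Rightarrow> real \<Rightarrow> real \<Rightarrow> real \<Rightarrow> complex" where
  "Qch k0 r phi theta x z =
     complex_of_real (sqrt (r * PsiD phi theta)) *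
     exp (- \<i> * complex_of_real (k0 * Dist2 r phi theta x z powr (1/2))) /
     complex_of_real (sqrt (4 * pi) * Dist2 r phi theta x z powr (3/4))"

definition gain :: "real \<Rightarrow> real \<Rightarrow> real \<Rightarrow> real \<Rightarrow> real \<Rightarrow> real \<Rightarrow> real" where
  "gain Lx Lz k0 r phi theta =
     integral {-Lz/2..Lz/2} (\<lambda>z. integral {-Lx/2..Lx/2} (\<lambda>x. (cmod (Qch k0 r phi theta x z))^2))"

text \<open>Closed form g^p; the sums over the two-element (multi)sets X_k, Z_k are written
  as sums over the signs s, s' in {1,-1}, so that coinciding values are still counted twice.\<close>
definition gain_p :: "real \<Rightarrow> real \<Rightarrow> real \<Rightarrow> real \<Rightarrow> real \<Rightarrow> real" where
  "gain_p Lx Lz r phi theta =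
     (let Ph = PhiD phi theta; Ps = PsiD phi theta; Th = ThetaD phi theta in
      1 / (4 * pi) * (\<Sum>s\<in>{1, -1::real}. \<Sum>s'\<in>{1, -1::real}.
        (let x = Lx / (2 * r) + s * Ph; z = Lz / (2 * r) + s' * Th in
          arctan ((x * z / Ps) / sqrt (Ps^2 + x^2 + z^2)))))"

definition corr :: "real \<Rightarrow> real \<Rightarrow> real \<Rightarrow> real \<Rightarrow> real \<Rightarrow> real \<Rightarrow> real \<Rightarrow> real \<Rightarrow> real \<Rightarrow> complex" where
  "corr Lx Lz k0 r1 phi1 theta1 r2 phi2 theta2 =
     complex_of_real (1 / sqrt (gain Lx Lz k0 r1 phi1 theta1 * gain Lx Lz k0 r2 phi2 theta2)) *
     integral {-Lz/2..Lz/2} (\<lambda>z. integral {-Lx/2..Lx/2}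
        (\<lambda>x. cnj (Qch k0 r1 phi1 theta1 x z) * Qch k0 r2 phi2 theta2 x z))"

definition cheb_node :: "nat \<Rightarrow> nat \<Rightarrow> real" where
  "cheb_node n j = cos ((2 * real j - 1) * pi / (2 * real n))"

definition cheb_gauss :: "nat \<Rightarrow> (real \<Rightarrow> complex) \<Rightarrow> complex" where
  "cheb_gauss n f = complex_of_real (pi / real n) *
     (\<Sum>j = 1..n. complex_of_real (sqrt (1 - (cheb_node n j)^2)) * f (cheb_node n j))"

definition corr_p :: "nat \<Rightarrow> real \<Rightarrow> real \<Rightarrow> real \<Rightarrow> real \<Rightarrow> real \<Rightarrow> real \<Rightarrow> real \<Rightarrow> real \<Rightarrow> real \<Rightarrow> complex" where
  "corr_p n Lx Lz k0 r1 phi1 theta1 r2 phi2 theta2 =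
     complex_of_real (pi^2 * (Lx * Lz) /
        (4 * (real n)^2 * sqrt (gain_p Lx Lz r1 phi1 theta1 * gain_p Lx Lz r2 phi2 theta2))) *
     (\<Sum>j = 1..n. \<Sum>j' = 1..n.
        complex_of_real (sqrt ((1 - (cheb_node n j)^2) * (1 - (cheb_node n j')^2))) *
        cnj (Qch k0 r1 phi1 theta1 (Lx * cheb_node n j / 2) (Lz * cheb_node n j' / 2)) *
        Qch k0 r2 phi2 theta2 (Lx * cheb_node n j / 2) (Lz * cheb_node n j' / 2))"

end

theory Submission
  imports Defs
begin

text \<open>With \<open>c = r \<Psi>\<close>, the user sits at height \<open>c\<close> above the point \<open>(r \<Phi>, r \<Theta>)\<close> of the
  aperture plane, and \<open>|Q|^2 = c / (4 pi D^(3/2))\<close> with \<open>D\<close> the squared distance to the user.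
  The integral of \<open>c D^(-3/2)\<close> over a rectangle is the solid angle it subtends; an iterated
  antiderivative is \<open>arctan (u v / (c sqrt (c^2 + u^2 + v^2)))\<close>, and evaluating it at the four
  corners and rescaling lengths by \<open>r\<close> gives \<open>g^p\<close>. The claims about \<open>\<rho>\<close> and \<open>\<rho>\<^sub>p\<close> are the
  substitution \<open>x = L t / 2\<close> and the expansion of the nested Chebyshev-Gauss rule.\<close>

lemma direction_cosines_sum_squares:
  "(PhiD phi theta)\<^sup>2 + (PsiD phi theta)\<^sup>2 + (ThetaD phi theta)\<^sup>2 = 1"
proof -
  have "(cos phi * sin theta)\<^sup>2 + (sin phi * sin theta)\<^sup>2 = ((sin phi)\<^sup>2 + (cos phi)\<^sup>2) * (sin theta)\<^sup>2"
    by algebra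
  then show ?thesis
    unfolding PhiD_def PsiD_def ThetaD_def by simp
qed

lemma Dist2_eq_sum_squares:
  "Dist2 r phi theta x z
     = (x - r * PhiD phi theta)\<^sup>2 + (z - r * ThetaD phi theta)\<^sup>2 + (r * PsiD phi theta)\<^sup>2"
proof -
  have "r\<^sup>2 = r\<^sup>2 * ((PhiD phi theta)\<^sup>2 + (PsiD phi theta)\<^sup>2 + (ThetaD phi theta)\<^sup>2)"
    by (simp add: direction_cosines_sum_squares)
  then show ?thesis
    unfolding Dist2_def by (simp add: algebra_simps power2_eq_square)
qed

lemma Dist2_nonneg: "Dist2 r phi theta x z \<ge> 0"
  unfolding Dist2_eq_sum_squares by simp

lemma cmod_Qch_squared:
  assumes "r * PsiD phi theta \<ge> 0"
  shows "(cmod (Qch k0 r phi theta x z))\<^sup>2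
           = r * PsiD phi theta / (4 * pi) / (Dist2 r phi theta x z * sqrt (Dist2 r phi theta x z))"
proof -
  define D where "D = Dist2 r phi theta x z"
  have "D \<ge> 0" unfolding D_def by (rule Dist2_nonneg)
  have "(D powr (3/4))\<^sup>2 = D powr (1 + 1/2)"
    by (simp add: power2_eq_square flip: powr_add)
  also have "\<dots> = D * sqrt D"
    unfolding powr_add using \<open>D \<ge> 0\<close> by (simp add: powr_half_sqrt)
  finally have "(D powr (3/4))\<^sup>2 = D * sqrt D" .
  moreover have "cmod (Qch k0 r phi theta x z) = sqrt (r * PsiD phi theta) / (sqrt (4 * pi) * D powr (3/4))"
    unfolding Qch_def D_def[symmetric] using assms by (simp add: norm_mult norm_divide norm_exp_eq_Re)
  ultimately show ?thesis
    unfolding D_def[symmetric] using assms by (simp add: power_divide power_mult_distrib)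
qed

lemma has_real_derivative_div_sqrt_add:
  fixes B u :: real
  assumes "B > 0"
  shows "((\<lambda>u. u / (B * sqrt (u\<^sup>2 + B))) has_real_derivative 1 / ((u\<^sup>2 + B) * sqrt (u\<^sup>2 + B))) (at u)"
proof (rule DERIV_cong)
  have pos: "u\<^sup>2 + B > 0" using assms by (simp add: add_nonneg_pos)
  define R where "R = sqrt (u\<^sup>2 + B)"
  have R: "R > 0" "R\<^sup>2 = u\<^sup>2 + B" using pos unfolding R_def by auto
  show "((\<lambda>u. u / (B * sqrt (u\<^sup>2 + B))) has_real_derivative (B * R - u * (B * (u / R))) / (B * R)\<^sup>2) (at u)"
    using pos assms R(1) unfolding R_def by (auto intro!: derivative_eq_intros simp: field_simps power2_eq_square)
  have "(B * R - u * (B * (u / R))) / (B * R)\<^sup>2 = B * (R\<^sup>2 - u\<^sup>2) / (B\<^sup>2 * R\<^sup>2 * R)"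
    using R assms by (simp add: field_simps power2_eq_square)
  also have "\<dots> = 1 / (R\<^sup>2 * R)"
    using R assms by (simp add: power2_eq_square)
  finally show "(B * R - u * (B * (u / R))) / (B * R)\<^sup>2 = 1 / ((u\<^sup>2 + B) * sqrt (u\<^sup>2 + B))"
    unfolding R_def[symmetric] R(2) .
qed

text \<open>The solid angle subtended by the rectangle \<open>[0, u] \<times> [0, v]\<close> from height \<open>c\<close>
  above its corner \<open>0\<close>.\<close>

definition rect_solid_angle :: "real \<Rightarrow> real \<Rightarrow> real \<Rightarrow> real" where
  "rect_solid_angle c u v = arctan (u * v / (c * sqrt (c\<^sup>2 + u\<^sup>2 + v\<^sup>2)))"

lemma has_real_derivative_rect_solid_angle:
  fixes c u v :: real
  assumes "c > 0"
  shows "(rect_solid_angle c u has_real_derivative c * u / ((c\<^sup>2 + v\<^sup>2) * sqrt (c\<^sup>2 + u\<^sup>2 + v\<^sup>2))) (at v)"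
proof (rule DERIV_cong)
  have pos: "c\<^sup>2 + u\<^sup>2 + v\<^sup>2 > 0" using assms by (simp add: add_pos_nonneg)
  define R where "R = sqrt (c\<^sup>2 + u\<^sup>2 + v\<^sup>2)"
  have R: "R > 0" "R\<^sup>2 = c\<^sup>2 + u\<^sup>2 + v\<^sup>2" using pos unfolding R_def by auto
  show "(rect_solid_angle c u has_real_derivative
         inverse (1 + (u * v / (c * R))\<^sup>2) * ((u * (c * R) - u * v * (c * (v / R))) / (c * R)\<^sup>2)) (at v)"
    using pos assms R(1) unfolding rect_solid_angle_def[abs_def] R_def
    by (auto intro!: derivative_eq_intros simp: field_simps power2_eq_square)
  have sq: "1 + (u * v / (c * R))\<^sup>2 = (c\<^sup>2 + u\<^sup>2) * (c\<^sup>2 + v\<^sup>2) / (c * R)\<^sup>2"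
  proof -
    have "1 + (u * v / (c * R))\<^sup>2 = ((c * R)\<^sup>2 + (u * v)\<^sup>2) / (c * R)\<^sup>2"
      using R(1) assms by (simp add: field_simps)
    also have "(c * R)\<^sup>2 + (u * v)\<^sup>2 = (c\<^sup>2 + u\<^sup>2) * (c\<^sup>2 + v\<^sup>2)"
      unfolding power_mult_distrib R(2) by (simp add: algebra_simps)
    finally show ?thesis .
  qed
  have quot: "(u * (c * R) - u * v * (c * (v / R))) / (c * R)\<^sup>2 = c * u * (c\<^sup>2 + u\<^sup>2) / ((c * R)\<^sup>2 * R)"
  proof -
    have "(u * (c * R) - u * v * (c * (v / R))) / (c * R)\<^sup>2 = c * u * (R\<^sup>2 - v\<^sup>2) / ((c * R)\<^sup>2 * R)"
      using R(1) assms by (simp add: field_simps power2_eq_square)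
    then show ?thesis using R(2) by simp
  qed
  have cancel: "inverse (A * B / C) * (c * u * A / (C * R)) = c * u / (B * R)"
    if "A > 0" "B > 0" "C > 0" for A B C :: real
    using that R(1) by (simp add: field_simps)
  show "inverse (1 + (u * v / (c * R))\<^sup>2) * ((u * (c * R) - u * v * (c * (v / R))) / (c * R)\<^sup>2)
      = c * u / ((c\<^sup>2 + v\<^sup>2) * sqrt (c\<^sup>2 + u\<^sup>2 + v\<^sup>2))"
    unfolding sq quot R_def[symmetric] using R(1) assms
    by (intro cancel) (simp_all add: add_pos_nonneg)
qed

lemma rect_solid_angle_minus_left: "rect_solid_angle c (- u) v = - rect_solid_angle c u v"
  unfolding rect_solid_angle_def by (simp add: arctan_minus[symmetric])

lemma rect_solid_angle_minus_right: "rect_solid_angle c u (- v) = - rect_solid_angle c u v"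
  unfolding rect_solid_angle_def by (simp add: arctan_minus[symmetric])

lemma rect_solid_angle_scale:
  assumes "t > 0"
  shows "rect_solid_angle (t * c) (t * u) (t * v) = rect_solid_angle c u v"
proof -
  have "sqrt ((t * c)\<^sup>2 + (t * u)\<^sup>2 + (t * v)\<^sup>2) = t * sqrt (c\<^sup>2 + u\<^sup>2 + v\<^sup>2)"
    using assms by (simp add: power_mult_distrib real_sqrt_mult flip: distrib_left)
  then have "t * u * (t * v) / (t * c * sqrt ((t * c)\<^sup>2 + (t * u)\<^sup>2 + (t * v)\<^sup>2))
      = (t * t) * (u * v) / ((t * t) * (c * sqrt (c\<^sup>2 + u\<^sup>2 + v\<^sup>2)))"
    by (simp add: ac_simps)
  then show ?thesis
    unfolding rect_solid_angle_def using assms by simp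
qed

lemma has_integral_inverse_cube_distance_line:
  fixes a B x1 x2 :: real
  assumes "B > 0" "x1 \<le> x2"
  shows "((\<lambda>x. 1 / (((x - a)\<^sup>2 + B) * sqrt ((x - a)\<^sup>2 + B))) has_integral
           (x2 - a) / (B * sqrt ((x2 - a)\<^sup>2 + B)) - (x1 - a) / (B * sqrt ((x1 - a)\<^sup>2 + B))) {x1..x2}"
proof (rule fundamental_theorem_of_calculus[OF \<open>x1 \<le> x2\<close>])
  fix x
  have "((\<lambda>x. x - a) has_real_derivative 1) (at x)"
    by (auto intro!: derivative_eq_intros)
  from DERIV_chain2[OF has_real_derivative_div_sqrt_add[OF \<open>B > 0\<close>] this]
  show "((\<lambda>x. (x - a) / (B * sqrt ((x - a)\<^sup>2 + B))) has_vector_derivative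
          1 / (((x - a)\<^sup>2 + B) * sqrt ((x - a)\<^sup>2 + B))) (at x within {x1..x2})"
    by (simp add: has_real_derivative_iff_has_vector_derivative[symmetric] has_field_derivative_at_within)
qed

lemma integral_inverse_cube_distance_rectangle:
  fixes a b c x1 x2 z1 z2 :: real
  assumes "c > 0" "x1 \<le> x2" "z1 \<le> z2"
  defines "D x z \<equiv> (x - a)\<^sup>2 + (z - b)\<^sup>2 + c\<^sup>2"
  shows "integral {z1..z2} (\<lambda>z. integral {x1..x2} (\<lambda>x. c / (D x z * sqrt (D x z))))
           = rect_solid_angle c (x2 - a) (z2 - b) - rect_solid_angle c (x1 - a) (z2 - b)
             - rect_solid_angle c (x2 - a) (z1 - b) + rect_solid_angle c (x1 - a) (z1 - b)"
proof -
  define \<Omega>' where "\<Omega>' u v = c * u / ((c\<^sup>2 + v\<^sup>2) * sqrt (c\<^sup>2 + u\<^sup>2 + v\<^sup>2))" for u v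
  have inner: "integral {x1..x2} (\<lambda>x. c / (D x z * sqrt (D x z))) = \<Omega>' (x2 - a) (z - b) - \<Omega>' (x1 - a) (z - b)"
    for z
  proof -
    have "(z - b)\<^sup>2 + c\<^sup>2 > 0" using assms by (simp add: add_nonneg_pos)
    from has_integral_mult_right[OF has_integral_inverse_cube_distance_line[OF this \<open>x1 \<le> x2\<close>], of c a]
    show ?thesis
      unfolding D_def \<Omega>'_def by (simp add: integral_unique ac_simps right_diff_distrib)
  qed
  have "((\<lambda>z. \<Omega>' (x2 - a) (z - b) - \<Omega>' (x1 - a) (z - b)) has_integral
         (rect_solid_angle c (x2 - a) (z2 - b) - rect_solid_angle c (x1 - a) (z2 - b))
         - (rect_solid_angle c (x2 - a) (z1 - b) - rect_solid_angle c (x1 - a) (z1 - b))) {z1..z2}"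
  proof (rule fundamental_theorem_of_calculus[OF \<open>z1 \<le> z2\<close>])
    fix z
    have "((\<lambda>z. z - b) has_real_derivative 1) (at z)"
      by (auto intro!: derivative_eq_intros)
    note chain = DERIV_chain2[OF has_real_derivative_rect_solid_angle[OF \<open>c > 0\<close>] this]
    have "((\<lambda>z. rect_solid_angle c (x2 - a) (z - b) - rect_solid_angle c (x1 - a) (z - b))
           has_real_derivative \<Omega>' (x2 - a) (z - b) - \<Omega>' (x1 - a) (z - b)) (at z)"
      unfolding \<Omega>'_def using DERIV_diff[OF chain chain] by simp
    then show "((\<lambda>z. rect_solid_angle c (x2 - a) (z - b) - rect_solid_angle c (x1 - a) (z - b))
           has_vector_derivative \<Omega>' (x2 - a) (z - b) - \<Omega>' (x1 - a) (z - b)) (at z within {z1..z2})"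
      by (simp add: has_real_derivative_iff_has_vector_derivative[symmetric] has_field_derivative_at_within)
  qed
  then show ?thesis
    unfolding inner by (simp add: integral_unique)
qed

lemma gain_p_eq_sum_rect_solid_angle:
  "gain_p Lx Lz r phi theta = 1 / (4 * pi) *
     (\<Sum>s\<in>{1, -1::real}. \<Sum>s'\<in>{1, -1::real}.
        rect_solid_angle (PsiD phi theta) (Lx / (2 * r) + s * PhiD phi theta) (Lz / (2 * r) + s' * ThetaD phi theta))"
  unfolding gain_p_def rect_solid_angle_def Let_def divide_divide_eq_left ..

lemma gain_eq_gain_p:
  assumes "Lx > 0" "Lz > 0" "r > 0" "PsiD phi theta > 0"
  shows "gain Lx Lz k0 r phi theta = gain_p Lx Lz r phi theta"
proof -
  define a b c where "a = r * PhiD phi theta" and "b = r * ThetaD phi theta" and "c = r * PsiD phi theta"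
  define X Z where "X s = Lx / (2 * r) + s * PhiD phi theta" and "Z s = Lz / (2 * r) + s * ThetaD phi theta"
    for s :: real
  have c: "c > 0" unfolding c_def using assms by simp
  have corners: "Lx / 2 - a = r * X (-1)" "- Lx / 2 - a = - (r * X 1)"
                "Lz / 2 - b = r * Z (-1)" "- Lz / 2 - b = - (r * Z 1)"
    unfolding a_def b_def X_def Z_def using assms by (simp_all add: field_simps)
  have "gain Lx Lz k0 r phi theta = integral {- Lz / 2..Lz / 2} (\<lambda>z. integral {- Lx / 2..Lx / 2} (\<lambda>x.
          1 / (4 * pi) * (c / (((x - a)\<^sup>2 + (z - b)\<^sup>2 + c\<^sup>2) * sqrt ((x - a)\<^sup>2 + (z - b)\<^sup>2 + c\<^sup>2)))))"
    unfolding gain_def cmod_Qch_squared[OF less_imp_le[OF c[unfolded c_def]]] Dist2_eq_sum_squares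
    unfolding a_def b_def c_def by simp
  also have "\<dots> = 1 / (4 * pi) *
      (rect_solid_angle c (Lx / 2 - a) (Lz / 2 - b) - rect_solid_angle c (- Lx / 2 - a) (Lz / 2 - b)
       - rect_solid_angle c (Lx / 2 - a) (- Lz / 2 - b) + rect_solid_angle c (- Lx / 2 - a) (- Lz / 2 - b))"
    unfolding integral_mult_right
    using integral_inverse_cube_distance_rectangle[OF c, of "- Lx / 2" "Lx / 2" "- Lz / 2" "Lz / 2" a b] assms
    by simp
  also have "\<dots> = gain_p Lx Lz r phi theta"
    unfolding gain_p_eq_sum_rect_solid_angle corners c_def rect_solid_angle_minus_left
      rect_solid_angle_minus_right rect_solid_angle_scale[OF \<open>r > 0\<close>]
    unfolding X_def Z_def by simp
  finally show ?thesis .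
qed

lemma integral_symmetric_Icc_rescale:
  fixes f :: "real \<Rightarrow> 'a::real_normed_vector"
  assumes "L > 0"
  shows "integral {-L/2..L/2} f = (L / 2) *\<^sub>R integral {-1..1} (\<lambda>t. f (L * t / 2))"
proof -
  have rescale: "((\<lambda>t. f (L * t / 2)) has_integral I /\<^sub>R (L / 2)) {-1..1} \<longleftrightarrow> (f has_integral I) {-L/2..L/2}"
    for I
    using has_integral_affinity_iff[of "L / 2" f 0 I "-L/2" "L/2"] assms by (simp add: mult.commute)
  show ?thesis
  proof (cases "f integrable_on {-L/2..L/2}")
    case True
    then have "((\<lambda>t. f (L * t / 2)) has_integral integral {-L/2..L/2} f /\<^sub>R (L / 2)) {-1..1}"
      using rescale by blast
    then show ?thesis
      using assms by (simp add: integral_unique)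
  next
    case False
    have "\<not> (\<lambda>t. f (L * t / 2)) integrable_on {-1..1}"
    proof
      assume "(\<lambda>t. f (L * t / 2)) integrable_on {-1..1}"
      then have "((\<lambda>t. f (L * t / 2)) has_integral
                   ((L / 2) *\<^sub>R integral {-1..1} (\<lambda>t. f (L * t / 2))) /\<^sub>R (L / 2)) {-1..1}"
        using assms by (simp add: integrable_integral)
      with False rescale show False by blast
    qed
    with False show ?thesis
      by (simp add: not_integrable_integral)
  qed
qed

lemma integral_symmetric_rectangle_rescale:
  fixes F :: "real \<Rightarrow> real \<Rightarrow> 'a::real_normed_vector"
  assumes "Lx > 0" "Lz > 0"
  shows "integral {-Lz/2..Lz/2} (\<lambda>z. integral {-Lx/2..Lx/2} (\<lambda>x. F x z))
           = (Lx * Lz / 4) *\<^sub>R integral {-1..1} (\<lambda>t'. integral {-1..1} (\<lambda>t. F (Lx * t / 2) (Lz * t' / 2)))"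
proof -
  have "integral {-Lz/2..Lz/2} (\<lambda>z. integral {-Lx/2..Lx/2} (\<lambda>x. F x z))
      = integral {-Lz/2..Lz/2} (\<lambda>z. (Lx / 2) *\<^sub>R integral {-1..1} (\<lambda>t. F (Lx * t / 2) z))"
    by (simp only: integral_symmetric_Icc_rescale[OF assms(1)])
  also have "\<dots> = (Lz / 2) *\<^sub>R integral {-1..1} (\<lambda>t'. (Lx / 2) *\<^sub>R integral {-1..1} (\<lambda>t. F (Lx * t / 2) (Lz * t' / 2)))"
    by (rule integral_symmetric_Icc_rescale[OF assms(2)])
  finally show ?thesis
    by simp
qed

lemma cheb_gauss_iterated:
  "cheb_gauss n (\<lambda>t'. cheb_gauss n (\<lambda>t. F t t'))
     = complex_of_real ((pi / real n)\<^sup>2) *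
       (\<Sum>j = 1..n. \<Sum>j' = 1..n.
          complex_of_real (sqrt ((1 - (cheb_node n j)\<^sup>2) * (1 - (cheb_node n j')\<^sup>2)))
          * F (cheb_node n j) (cheb_node n j'))"
  unfolding cheb_gauss_def
  by (subst sum.swap) (simp add: sum_distrib_left real_sqrt_mult power2_eq_square mult_ac)

lemma corr_eq_unit_square_integral:
  assumes "Lx > 0" "Lz > 0"
  shows "corr Lx Lz k0 r1 phi1 theta1 r2 phi2 theta2 =
    complex_of_real (1 / sqrt (gain Lx Lz k0 r1 phi1 theta1 * gain Lx Lz k0 r2 phi2 theta2) * (Lx * Lz / 4)) *
    integral {-1..1} (\<lambda>t'. integral {-1..1} (\<lambda>t.
      cnj (Qch k0 r1 phi1 theta1 (Lx * t / 2) (Lz * t' / 2)) * Qch k0 r2 phi2 theta2 (Lx * t / 2) (Lz * t' / 2)))"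
  unfolding corr_def integral_symmetric_rectangle_rescale[OF assms]
  by (simp add: scaleR_conv_of_real mult.assoc)

lemma corr_p_eq_cheb_gauss:
  "corr_p n Lx Lz k0 r1 phi1 theta1 r2 phi2 theta2 =
    complex_of_real (1 / sqrt (gain_p Lx Lz r1 phi1 theta1 * gain_p Lx Lz r2 phi2 theta2) * (Lx * Lz / 4)) *
    cheb_gauss n (\<lambda>t'. cheb_gauss n (\<lambda>t.
      cnj (Qch k0 r1 phi1 theta1 (Lx * t / 2) (Lz * t' / 2)) * Qch k0 r2 phi2 theta2 (Lx * t / 2) (Lz * t' / 2)))"
proof -
  have "pi\<^sup>2 * (Lx * Lz) / (4 * (real n)\<^sup>2 * C) = 1 / C * (Lx * Lz / 4) * (pi / real n)\<^sup>2" for C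
    by (simp add: power_divide mult_ac)
  then show ?thesis
    unfolding corr_p_def cheb_gauss_iterated by (simp only: of_real_mult mult.assoc)
qed

theorem lemma4:
  fixes Lx Lz k0 :: real and r phi theta :: "nat \<Rightarrow> real" and n :: nat
  assumes "Lx > 0" and "Lz > 0" and "k0 > 0" and "n \<ge> 1"
    and "\<And>k. k \<in> {1, 2} \<Longrightarrow> r k > 0"
    and "\<And>k. k \<in> {1, 2} \<Longrightarrow> phi k \<in> {0..pi}"
    and "\<And>k. k \<in> {1, 2} \<Longrightarrow> theta k \<in> {0..pi}"
    and "\<And>k. k \<in> {1, 2} \<Longrightarrow> PsiD (phi k) (theta k) > 0"
  shows "(\<forall>k\<in>{1, 2}. gain Lx Lz k0 (r k) (phi k) (theta k) = gain_p Lx Lz (r k) (phi k) (theta k))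
    \<and> corr Lx Lz k0 (r 1) (phi 1) (theta 1) (r 2) (phi 2) (theta 2) =
        complex_of_real (1 / sqrt (gain Lx Lz k0 (r 1) (phi 1) (theta 1) * gain Lx Lz k0 (r 2) (phi 2) (theta 2))
                         * (Lx * Lz / 4)) *
        integral {-1..1} (\<lambda>t'. integral {-1..1} (\<lambda>t.
          cnj (Qch k0 (r 1) (phi 1) (theta 1) (Lx * t / 2) (Lz * t' / 2)) *
          Qch k0 (r 2) (phi 2) (theta 2) (Lx * t / 2) (Lz * t' / 2)))
    \<and> corr_p n Lx Lz k0 (r 1) (phi 1) (theta 1) (r 2) (phi 2) (theta 2) =
        complex_of_real (1 / sqrt (gain_p Lx Lz (r 1) (phi 1) (theta 1) * gain_p Lx Lz (r 2) (phi 2) (theta 2))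
                         * (Lx * Lz / 4)) *
        cheb_gauss n (\<lambda>t'. cheb_gauss n (\<lambda>t.
          cnj (Qch k0 (r 1) (phi 1) (theta 1) (Lx * t / 2) (Lz * t' / 2)) *
          Qch k0 (r 2) (phi 2) (theta 2) (Lx * t / 2) (Lz * t' / 2)))"
proof (intro conjI ballI)
  show "gain Lx Lz k0 (r k) (phi k) (theta k) = gain_p Lx Lz (r k) (phi k) (theta k)" if "k \<in> {1, 2}" for k
    using gain_eq_gain_p assms(1,2,5,8) that by blast
qed (rule corr_eq_unit_square_integral[OF assms(1,2)], rule corr_p_eq_cheb_gauss)

end
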